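(* Let $S$ be a powerful multiset over a finite set $E$ such that $r_S(X)\le |X|$ for all $X\subseteq E$. Then $S$ is (isomorphic to) a linear powerful set.
   Context: A multiset over $E$ has indicator function $f:2^E\to\mathbb{Z}_{\ge0}$ giving multiplicities, with $f(\emptyset)\neq0$ assumed; its rank function is $r_S(X)=\log_2\Big(\sum_{Y\subseteq E} f(Y)\big/\sum_{Y\subseteq E\setminus X} f(Y)\Big)$, and $S$ is a powerful multiset if $r_S(X)\in\mathbb{Z}$ for all $X\subseteq E$. Two powerful multisets with indicator functions $f_1,f_2$ on ground sets $E_1,E_2$ are isomorphic if there is a bijection $\phi:E_1\to E_2$ and $\alpha\in\mathbb{R}\setminus\{0\}$ with $f_1(X)=\alpha f_2(\phi(X))$ for all $X$. A powerful set is a set $S\subseteq 2^E$ such that for every $X\subseteq E$ the number of members of $S$ contained in $X$ is a power of 2; it is linear if it is a binary linear space, i.e. $\emptyset\in S$ and $S$ is closed under symmetric difference. *)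

theory Defs
  imports Complex_Main
begin

text \<open>A multiset over ground set E is given by its indicator function
  f :: 'a set => nat (only values on subsets of E matter).\<close>

definition rank_ms :: "'a set \<Rightarrow> ('a set \<Rightarrow> nat) \<Rightarrow> 'a set \<Rightarrow> real" where
  "rank_ms E f X = log 2 (real (\<Sum>Y\<in>Pow E. f Y) / real (\<Sum>Y\<in>Pow (E - X). f Y))"

definition powerful_multiset :: "'a set \<Rightarrow> ('a set \<Rightarrow> nat) \<Rightarrow> bool" where
  "powerful_multiset E f \<longleftrightarrow> f {} \<noteq> 0 \<and> (\<forall>X. X \<subseteq> E \<longrightarrow> rank_ms E f X \<in> \<int>)"

definition powerful_set :: "'a set \<Rightarrow> 'a set set \<Rightarrow> bool" where
  "powerful_set E S \<longleftrightarrow> S \<subseteq> Pow E \<and>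
     (\<forall>X. X \<subseteq> E \<longrightarrow> (\<exists>k::nat. card {Y \<in> S. Y \<subseteq> X} = 2 ^ k))"

definition linear_set :: "'a set set \<Rightarrow> bool" where
  "linear_set S \<longleftrightarrow> {} \<in> S \<and> (\<forall>A\<in>S. \<forall>B\<in>S. (A - B) \<union> (B - A) \<in> S)"

definition set_indicator :: "'a set set \<Rightarrow> 'a set \<Rightarrow> nat" where
  "set_indicator S Y = (if Y \<in> S then 1 else 0)"

definition ms_isomorphic ::
  "'a set \<Rightarrow> ('a set \<Rightarrow> nat) \<Rightarrow> 'b set \<Rightarrow> ('b set \<Rightarrow> nat) \<Rightarrow> bool" where
  "ms_isomorphic E1 f1 E2 f2 \<longleftrightarrow>
     (\<exists>\<phi> (\<alpha>::real). bij_betw \<phi> E1 E2 \<and> \<alpha> \<noteq> 0 \<and>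
        (\<forall>X. X \<subseteq> E1 \<longrightarrow> real (f1 X) = \<alpha> * real (f2 (\<phi> ` X))))"

end

theory Submission
  imports Defs "HOL-Computational_Algebra.Primes"
begin

(* Write mass f Z for the total multiplicity of the members inside Z; the hypotheses say that
   mass f E = 2^k * mass f (E - X) with k <= |X|.  Induct on E = insert e F.  The contraction
   Y |-> f Y + f (insert e Y) on F inherits the hypotheses, hence equals c * 1_L for a linear
   set L.  Taking X = {e} shows that the members containing e carry either no mass or exactly
   half of it.  In the first case f is the contraction.  In the second case the restriction of f
   to F also inherits the hypotheses, so it equals c0 * 1_L0 for a linear set L0 inside L, and
   the mass count c |L| = 2 c0 |L0| forces the members containing e to be insert e applied to a
   single coset a + L0 of L0 in L; then L0 together with these members is again linear. *)

definition mass :: "('a set \<Rightarrow> nat) \<Rightarrow> 'a set \<Rightarrow> nat" where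
  "mass f Z = (\<Sum>Y\<in>Pow Z. f Y)"

lemma mass_insert:
  assumes "finite Z" "e \<notin> Z"
  shows "mass f (insert e Z) = mass f Z + mass (\<lambda>Y. f (insert e Y)) Z"
proof -
  have inj: "inj_on (insert e) (Pow Z)"
    using assms(2) unfolding inj_on_def by (metis Pow_iff insert_ident subsetD)
  have disj: "Pow Z \<inter> insert e ` Pow Z = {}"
    using assms(2) by auto
  have "mass f (insert e Z) = (\<Sum>Y\<in>Pow Z \<union> insert e ` Pow Z. f Y)"
    by (simp add: mass_def Pow_insert)
  also have "\<dots> = mass f Z + (\<Sum>Y\<in>insert e ` Pow Z. f Y)"
    using disj assms(1) by (simp add: mass_def sum.union_disjoint)
  also have "(\<Sum>Y\<in>insert e ` Pow Z. f Y) = mass (\<lambda>Y. f (insert e Y)) Z"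
    using inj by (simp add: mass_def sum.reindex)
  finally show ?thesis .
qed

lemma mass_mono: "finite Z \<Longrightarrow> A \<subseteq> Z \<Longrightarrow> mass f A \<le> mass f Z"
  unfolding mass_def by (rule sum_mono2) auto

lemma mass_pos:
  assumes "finite Z" "f {} \<noteq> 0"
  shows "0 < mass f Z"
proof -
  have "f {} \<le> mass f Z"
    unfolding mass_def using assms(1) by (intro member_le_sum) auto
  with assms(2) show ?thesis
    by simp
qed

lemma mass_eq_card:
  assumes "finite Z" "\<And>Y. Y \<subseteq> Z \<Longrightarrow> f Y = c * set_indicator L Y"
  shows "mass f Z = c * card {Y \<in> L. Y \<subseteq> Z}"
proof -
  have "mass f Z = (\<Sum>Y\<in>Pow Z. if Y \<in> {Y \<in> L. Y \<subseteq> Z} then c else 0)"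
    unfolding mass_def using assms(2) by (intro sum.cong) (auto simp: set_indicator_def)
  also have "\<dots> = c * card (Pow Z \<inter> L)"
    using assms(1) by (simp add: sum.If_cases)
  also have "Pow Z \<inter> L = {Y \<in> L. Y \<subseteq> Z}"
    by auto
  finally show ?thesis .
qed

definition bounded_powerful :: "'a set \<Rightarrow> ('a set \<Rightarrow> nat) \<Rightarrow> bool" where
  "bounded_powerful E f \<longleftrightarrow> f {} \<noteq> 0 \<and>
     (\<forall>X\<subseteq>E. \<exists>k\<le>card X. mass f E = 2 ^ k * mass f (E - X))"

lemma bounded_powerfulD:
  "bounded_powerful E f \<Longrightarrow> X \<subseteq> E \<Longrightarrow> \<exists>k\<le>card X. mass f E = 2 ^ k * mass f (E - X)"
  by (simp add: bounded_powerful_def)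

lemma bounded_powerful_if_rank_le_card:
  assumes fin: "finite E" and pm: "powerful_multiset E f"
    and rk: "\<forall>X. X \<subseteq> E \<longrightarrow> rank_ms E f X \<le> real (card X)"
  shows "bounded_powerful E f"
  unfolding bounded_powerful_def
proof (intro conjI allI impI)
  show f0: "f {} \<noteq> 0"
    using pm by (simp add: powerful_multiset_def)
  fix X assume X: "X \<subseteq> E"
  define q where "q = real (mass f E) / real (mass f (E - X))"
  have pos: "0 < mass f (E - X)"
    using mass_pos fin f0 by blast
  have q_ge_1: "1 \<le> q"
    using pos mass_mono[OF fin, of "E - X" f] by (simp add: q_def)
  have rank: "rank_ms E f X = log 2 q"
    by (simp add: rank_ms_def q_def mass_def)
  then obtain m where m: "log 2 q = of_int m"
    using pm X unfolding powerful_multiset_def by (metis Ints_cases)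
  have "0 \<le> log 2 q"
    using q_ge_1 by simp
  then have "0 \<le> m"
    using m by simp
  have "real_of_int m \<le> real (card X)"
    using rk X rank m by metis
  then have "m \<le> card X"
    by linarith
  have "q = 2 powr (log 2 q)"
    using q_ge_1 by simp
  also have "\<dots> = 2 powr real (nat m)"
    using m \<open>0 \<le> m\<close> by simp
  also have "\<dots> = 2 ^ nat m"
    by (simp add: powr_realpow)
  finally have "q = 2 ^ nat m" .
  then have "real (mass f E) = real (2 ^ nat m * mass f (E - X))"
    using pos by (simp add: q_def field_simps)
  then have "mass f E = 2 ^ nat m * mass f (E - X)"
    by (rule of_nat_eq_iff[THEN iffD1])
  then show "\<exists>k\<le>card X. mass f E = 2 ^ k * mass f (E - X)"
    using \<open>m \<le> card X\<close> by (intro exI[of _ "nat m"]) auto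
qed

definition contract :: "'a \<Rightarrow> ('a set \<Rightarrow> nat) \<Rightarrow> 'a set \<Rightarrow> nat" where
  "contract e f Y = f Y + f (insert e Y)"

lemma mass_contract:
  assumes "finite Z" "e \<notin> Z"
  shows "mass (contract e f) Z = mass f (insert e Z)"
  using mass_insert[OF assms] by (simp add: mass_def contract_def sum.distrib)

lemma bounded_powerful_contract:
  assumes F: "finite F" "e \<notin> F" and bp: "bounded_powerful (insert e F) f"
  shows "bounded_powerful F (contract e f)"
  unfolding bounded_powerful_def
proof (intro conjI allI impI)
  show "contract e f {} \<noteq> 0"
    using bp by (simp add: bounded_powerful_def contract_def)
  fix X assume X: "X \<subseteq> F"
  then obtain k where "k \<le> card X" "mass f (insert e F) = 2 ^ k * mass f (insert e F - X)"
    using bounded_powerfulD[OF bp, of X] by blast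
  moreover have "insert e F - X = insert e (F - X)"
    using X F(2) by auto
  ultimately show "\<exists>k\<le>card X. mass (contract e f) F = 2 ^ k * mass (contract e f) (F - X)"
    using F by (auto simp: mass_contract)
qed

lemma bounded_powerful_mass_insert:
  assumes e: "e \<notin> F" and bp: "bounded_powerful (insert e F) f"
  shows "mass f (insert e F) = mass f F \<or> mass f (insert e F) = 2 * mass f F"
proof -
  obtain k where "k \<le> 1" "mass f (insert e F) = 2 ^ k * mass f (insert e F - {e})"
    using bounded_powerfulD[OF bp, of "{e}"] by auto
  moreover have "insert e F - {e} = F"
    using e by auto
  ultimately show ?thesis
    by (cases k) auto
qed

lemma bounded_powerful_delete:
  assumes F: "finite F" "e \<notin> F" and bp: "bounded_powerful (insert e F) f"
    and double: "mass f (insert e F) = 2 * mass f F"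
  shows "bounded_powerful F f"
  unfolding bounded_powerful_def
proof (intro conjI allI impI)
  show f0: "f {} \<noteq> 0"
    using bp by (simp add: bounded_powerful_def)
  fix X assume X: "X \<subseteq> F"
  then obtain k where k: "k \<le> card (insert e X)"
      "mass f (insert e F) = 2 ^ k * mass f (insert e F - insert e X)"
    using bounded_powerfulD[OF bp, of "insert e X"] by blast
  have "insert e F - insert e X = F - X"
    using F(2) by auto
  with k(2) double have eq: "2 * mass f F = 2 ^ k * mass f (F - X)"
    by simp
  have "k \<noteq> 0"
  proof
    assume "k = 0"
    then have "2 * mass f F \<le> mass f F"
      using eq mass_mono[OF F(1), of "F - X" f] by simp
    then show False
      using mass_pos[of F f] F(1) f0 by simp
  qed
  then obtain j where j: "k = Suc j"
    using not0_implies_Suc by blast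
  have "card (insert e X) = Suc (card X)"
    using X F finite_subset by (metis card_insert_disjoint subsetD)
  then show "\<exists>j\<le>card X. mass f F = 2 ^ j * mass f (F - X)"
    using k(1) eq j by (intro exI[of _ j]) auto
qed

lemma inj_on_sym_diff: "inj_on (sym_diff a) A"
  by (rule inj_onI) blast

lemma sym_diff_image_subset_diff:
  assumes L0: "linear_set L0" and L: "linear_set L" "L0 \<subseteq> L" and a: "a \<in> L - L0"
  shows "sym_diff a ` L0 \<subseteq> L - L0"
proof
  fix Y assume "Y \<in> sym_diff a ` L0"
  then obtain l where l: "l \<in> L0" "Y = sym_diff a l"
    by blast
  have "Y \<in> L"
    using L a l unfolding linear_set_def by blast
  moreover have "Y \<notin> L0"
  proof
    assume "Y \<in> L0"
    then have "sym_diff Y l \<in> L0"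
      using L0 l(1) unfolding linear_set_def by blast
    moreover have "sym_diff Y l = a"
      using l(2) by blast
    ultimately show False
      using a by simp
  qed
  ultimately show "Y \<in> L - L0"
    by simp
qed

lemma linear_subset_coset_decomposition:
  assumes fin: "finite L" and L0: "linear_set L0" and L: "linear_set L" "L0 \<subseteq> L"
    and c: "0 < c0" "c0 \<le> c" and card: "c * card L = 2 * (c0 * card L0)"
  obtains a where "a \<in> L"
    "\<And>Y. c * set_indicator L Y = c0 * set_indicator L0 Y + c0 * set_indicator (sym_diff a ` L0) Y"
proof (cases "L0 = L")
  case True
  have "0 < card L0"
    using fin L0 True card_gt_0_iff unfolding linear_set_def by blast
  then have "c = 2 * c0"
    using card True by simp
  moreover have "sym_diff {} ` L0 = L0"
    by simp
  ultimately show ?thesis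
    using that[of "{}"] L0 True unfolding linear_set_def set_indicator_def by auto
next
  case False
  \<comment> \<open>a coset of L0 disjoint from L0 doubles the count, so the mass identity forces c = c0\<close>
  then obtain a where a: "a \<in> L - L0"
    using L(2) by blast
  have fin0: "finite L0"
    using fin L(2) finite_subset by blast
  have coset: "sym_diff a ` L0 \<subseteq> L - L0"
    using sym_diff_image_subset_diff[OF L0 L a] .
  have card_coset: "card (sym_diff a ` L0) = card L0"
    using card_image[OF inj_on_sym_diff] .
  have card_split: "card L = card L0 + card (L - L0)"
    using fin L(2) by (metis card_Diff_subset card_mono fin0 le_add_diff_inverse)
  have "card L0 \<le> card (L - L0)"
    using card_mono[OF _ coset] fin card_coset by simp
  then have "c * (2 * card L0) \<le> c * card L"
    using card_split by simp
  also have "\<dots> = c0 * (2 * card L0)"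
    using card by simp
  finally have "c * (2 * card L0) \<le> c0 * (2 * card L0)" .
  moreover have "0 < card L0"
    using fin0 L0 card_gt_0_iff unfolding linear_set_def by blast
  ultimately have "c = c0"
    using c by simp
  then have "card (L - L0) = card L0"
    using card card_split c(1) by simp
  then have "sym_diff a ` L0 = L - L0"
    using card_subset_eq[OF _ coset] fin card_coset by simp
  then have "c * set_indicator L Y = c0 * set_indicator L0 Y + c0 * set_indicator (sym_diff a ` L0) Y"
    for Y
    using L(2) \<open>c = c0\<close> unfolding set_indicator_def by (cases "Y \<in> L0") auto
  with a that show ?thesis
    by blast
qed

lemma linear_set_insert_coset:
  assumes L0: "linear_set L0" "L0 \<subseteq> Pow F" and a: "a \<subseteq> F" and e: "e \<notin> F"
  shows "linear_set (L0 \<union> insert e ` sym_diff a ` L0)" (is "linear_set ?L")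
  unfolding linear_set_def
proof (intro conjI ballI)
  show "{} \<in> ?L"
    using L0(1) unfolding linear_set_def by blast
  fix A B assume "A \<in> ?L" "B \<in> ?L"
  then obtain l1 l2 where l: "l1 \<in> L0" "l2 \<in> L0"
    and A: "A = l1 \<or> A = insert e (sym_diff a l1)" and B: "B = l2 \<or> B = insert e (sym_diff a l2)"
    by blast
  have l12: "sym_diff l1 l2 \<in> L0"
    using L0(1) l unfolding linear_set_def by blast
  have "e \<notin> l1" "e \<notin> l2" "e \<notin> a"
    using L0(2) l a e by auto
  then have ml: "sym_diff l1 (insert e (sym_diff a l2)) = insert e (sym_diff a (sym_diff l1 l2))"
    and lm: "sym_diff (insert e (sym_diff a l1)) l2 = insert e (sym_diff a (sym_diff l1 l2))"
    and mm: "sym_diff (insert e (sym_diff a l1)) (insert e (sym_diff a l2)) = sym_diff l1 l2"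
    by blast+
  from A B show "sym_diff A B \<in> ?L"
  proof (elim disjE)
    assume "A = l1" "B = l2"
    then show ?thesis
      using l12 by blast
  next
    assume "A = l1" "B = insert e (sym_diff a l2)"
    then have sd: "sym_diff A B = insert e (sym_diff a (sym_diff l1 l2))"
      by (simp only: ml)
    show ?thesis
      unfolding sd using l12 by blast
  next
    assume "A = insert e (sym_diff a l1)" "B = l2"
    then have sd: "sym_diff A B = insert e (sym_diff a (sym_diff l1 l2))"
      by (simp only: lm)
    show ?thesis
      unfolding sd using l12 by blast
  next
    assume "A = insert e (sym_diff a l1)" "B = insert e (sym_diff a l2)"
    then have sd: "sym_diff A B = sym_diff l1 l2"
      by (simp only: mm)
    show ?thesis
      unfolding sd using l12 by blast
  qed
qed

definition multiple_of_linear_set :: "'a set \<Rightarrow> ('a set \<Rightarrow> nat) \<Rightarrow> bool" where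
  "multiple_of_linear_set E f \<longleftrightarrow>
     (\<exists>c>0. \<exists>L\<subseteq>Pow E. linear_set L \<and> (\<forall>Y\<subseteq>E. f Y = c * set_indicator L Y))"

lemma multiple_of_linear_set_insert_coset:
  assumes e: "e \<notin> F" and c: "0 < c" and L0: "linear_set L0" "L0 \<subseteq> Pow F" and a: "a \<subseteq> F"
    and f0: "\<And>Y. Y \<subseteq> F \<Longrightarrow> f Y = c * set_indicator L0 Y"
    and f1: "\<And>Y. Y \<subseteq> F \<Longrightarrow> f (insert e Y) = c * set_indicator (sym_diff a ` L0) Y"
  shows "multiple_of_linear_set (insert e F) f"
  unfolding multiple_of_linear_set_def
proof (intro exI[of _ c] exI[of _ "L0 \<union> insert e ` sym_diff a ` L0"] conjI allI impI)
  define M where "M = sym_diff a ` L0"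
  have M: "M \<subseteq> Pow F"
    using L0(2) a by (auto simp: M_def)
  show "0 < c" by fact
  show "L0 \<union> insert e ` sym_diff a ` L0 \<subseteq> Pow (insert e F)"
    using L0(2) M by (auto simp: M_def)
  show "linear_set (L0 \<union> insert e ` sym_diff a ` L0)"
    using linear_set_insert_coset[OF L0 a e] .
  fix Y assume Y: "Y \<subseteq> insert e F"
  show "f Y = c * set_indicator (L0 \<union> insert e ` sym_diff a ` L0) Y"
  proof (cases "e \<in> Y")
    case True
    then have Y_eq: "Y = insert e (Y - {e})" and "Y - {e} \<subseteq> F" "Y \<notin> L0"
      using Y L0(2) e by auto
    have "Y \<in> insert e ` M \<longleftrightarrow> Y - {e} \<in> M"
    proof
      assume "Y \<in> insert e ` M"
      then obtain Z where "Z \<in> M" "Y = insert e Z"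
        by blast
      moreover have "e \<notin> Z"
        using \<open>Z \<in> M\<close> M e by blast
      ultimately show "Y - {e} \<in> M"
        by simp
    next
      assume "Y - {e} \<in> M"
      then show "Y \<in> insert e ` M"
        using Y_eq by (metis imageI)
    qed
    moreover have "f Y = c * set_indicator M (Y - {e})"
      using f1[OF \<open>Y - {e} \<subseteq> F\<close>] Y_eq by (metis M_def)
    ultimately show ?thesis
      using \<open>Y \<notin> L0\<close> by (simp add: set_indicator_def M_def)
  next
    case False
    then have "Y \<subseteq> F" "Y \<notin> insert e ` M"
      using Y by auto
    then show ?thesis
      using f0 by (simp add: set_indicator_def M_def)
  qed
qed

lemma multiple_of_linear_set_insert_loop:
  assumes e: "e \<notin> F" and contr: "multiple_of_linear_set F (contract e f)"
    and zero: "\<And>Y. Y \<subseteq> F \<Longrightarrow> f (insert e Y) = 0"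
  shows "multiple_of_linear_set (insert e F) f"
proof -
  obtain c L where c: "0 < c" and L: "L \<subseteq> Pow F" "linear_set L"
    and fL: "\<And>Y. Y \<subseteq> F \<Longrightarrow> contract e f Y = c * set_indicator L Y"
    using contr unfolding multiple_of_linear_set_def by blast
  have "f Y = c * set_indicator L Y" if Y: "Y \<subseteq> insert e F" for Y
  proof (cases "e \<in> Y")
    case True
    then have "Y = insert e (Y - {e})" "Y - {e} \<subseteq> F" "Y \<notin> L"
      using Y L(1) e by auto
    then show ?thesis
      using zero by (metis mult_0_right set_indicator_def)
  next
    case False
    then have "Y \<subseteq> F"
      using Y by auto
    then show ?thesis
      using fL zero by (simp add: contract_def)
  qed
  with c L show ?thesis
    unfolding multiple_of_linear_set_def by blast
qed

lemma multiple_of_linear_set_insert_double: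
  assumes F: "finite F" "e \<notin> F"
    and del: "multiple_of_linear_set F f" and contr: "multiple_of_linear_set F (contract e f)"
    and double: "mass f (insert e F) = 2 * mass f F"
  shows "multiple_of_linear_set (insert e F) f"
proof -
  obtain c0 L0 where c0: "0 < c0" and L0: "L0 \<subseteq> Pow F" "linear_set L0"
    and f0: "\<And>Y. Y \<subseteq> F \<Longrightarrow> f Y = c0 * set_indicator L0 Y"
    using del unfolding multiple_of_linear_set_def by blast
  obtain c L where L: "L \<subseteq> Pow F" "linear_set L"
    and fc: "\<And>Y. Y \<subseteq> F \<Longrightarrow> contract e f Y = c * set_indicator L Y"
    using contr unfolding multiple_of_linear_set_def by blast
  have "L0 \<subseteq> L"
  proof
    fix Y assume "Y \<in> L0"
    then have "Y \<subseteq> F" "0 < f Y"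
      using L0(1) f0 c0 by (auto simp: set_indicator_def)
    then have "0 < c * set_indicator L Y"
      using fc[of Y] unfolding contract_def by linarith
    then show "Y \<in> L"
      by (simp add: set_indicator_def split: if_splits)
  qed
  have "{} \<in> L0" "{} \<in> L"
    using L0(2) L(2) unfolding linear_set_def by blast+
  then have "c0 \<le> c"
    using f0[of "{}"] fc[of "{}"] by (simp add: contract_def set_indicator_def)
  have "{Y \<in> L. Y \<subseteq> F} = L" "{Y \<in> L0. Y \<subseteq> F} = L0"
    using L(1) L0(1) by blast+
  then have "c * card L = mass (contract e f) F"
    using mass_eq_card[OF F(1) fc] by simp
  also have "\<dots> = 2 * mass f F"
    using mass_contract[OF F] double by simp
  also have "mass f F = c0 * card L0"
    using mass_eq_card[OF F(1) f0] \<open>{Y \<in> L0. Y \<subseteq> F} = L0\<close> by simp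
  finally have "c * card L = 2 * (c0 * card L0)" .
  moreover have "finite L"
    using finite_subset[OF L(1)] F(1) by simp
  ultimately obtain a where a: "a \<in> L"
    and split: "\<And>Y. c * set_indicator L Y = c0 * set_indicator L0 Y + c0 * set_indicator (sym_diff a ` L0) Y"
    using linear_subset_coset_decomposition[OF _ L0(2) L(2) \<open>L0 \<subseteq> L\<close> c0 \<open>c0 \<le> c\<close>]
    by metis
  have "f (insert e Y) = c0 * set_indicator (sym_diff a ` L0) Y" if "Y \<subseteq> F" for Y
    using fc[OF that] f0[OF that] split[of Y] by (simp add: contract_def)
  moreover have "a \<subseteq> F"
    using a L(1) by blast
  ultimately show ?thesis
    using multiple_of_linear_set_insert_coset[OF F(2) c0 L0(2,1)] f0 by blast
qed

lemma multiple_of_linear_set_if_bounded_powerful: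
  "finite E \<Longrightarrow> bounded_powerful E f \<Longrightarrow> multiple_of_linear_set E f"
proof (induction E arbitrary: f rule: finite_induct)
  case empty
  then have "f {} \<noteq> 0"
    by (simp add: bounded_powerful_def)
  then show ?case
    unfolding multiple_of_linear_set_def linear_set_def set_indicator_def
    by (intro exI[of _ "f {}"] exI[of _ "{{}}"]) auto
next
  case (insert e F f)
  have contr: "multiple_of_linear_set F (contract e f)"
    using insert.IH[OF bounded_powerful_contract[OF insert(1,2) insert.prems]] .
  consider "mass f (insert e F) = mass f F" | "mass f (insert e F) = 2 * mass f F"
    using bounded_powerful_mass_insert[OF insert(2) insert.prems] by blast
  then show ?case
  proof cases
    case 1
    then have "mass (\<lambda>Y. f (insert e Y)) F = 0"
      using mass_insert[OF insert(1,2)] by simp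
    then have "f (insert e Y) = 0" if "Y \<subseteq> F" for Y
      using that insert(1) by (simp add: mass_def)
    then show ?thesis
      using multiple_of_linear_set_insert_loop[OF insert(2) contr] by blast
  next
    case 2
    then have "multiple_of_linear_set F f"
      using insert.IH[OF bounded_powerful_delete[OF insert(1,2) insert.prems]] by blast
    then show ?thesis
      using multiple_of_linear_set_insert_double[OF insert(1,2) _ contr 2] by blast
  qed
qed

lemma powerful_set_if_bounded_powerful:
  assumes fin: "finite E" and bp: "bounded_powerful E f" and L: "L \<subseteq> Pow E"
    and fL: "\<And>Y. Y \<subseteq> E \<Longrightarrow> f Y = c * set_indicator L Y"
  shows "powerful_set E L"
  unfolding powerful_set_def
proof (intro conjI allI impI)
  show "L \<subseteq> Pow E" by fact
  fix X assume X: "X \<subseteq> E"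
  have mass_sub: "mass f Z = c * card {Y \<in> L. Y \<subseteq> Z}" if "Z \<subseteq> E" for Z
    using fin that by (intro mass_eq_card fL) (auto intro: finite_subset)
  have "f {} \<noteq> 0"
    using bp by (simp add: bounded_powerful_def)
  then have "0 < c" "{Y \<in> L. Y \<subseteq> {}} = {{}}"
    using fL[of "{}"] by (auto simp: set_indicator_def split: if_splits)
  obtain k0 where "mass f E = 2 ^ k0 * mass f (E - E)"
    using bounded_powerfulD[OF bp, of E] by blast
  then have total: "mass f E = c * 2 ^ k0"
    using mass_sub[of "{}"] \<open>{Y \<in> L. Y \<subseteq> {}} = {{}}\<close> by simp
  obtain k where "mass f E = 2 ^ k * mass f (E - (E - X))"
    using bounded_powerfulD[OF bp, of "E - X"] by blast
  moreover have "E - (E - X) = X"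
    using X by blast
  ultimately have "c * 2 ^ k0 = c * (card {Y \<in> L. Y \<subseteq> X} * 2 ^ k)"
    using total mass_sub[OF X] by (simp add: ac_simps)
  then have "card {Y \<in> L. Y \<subseteq> X} dvd 2 ^ k0"
    using \<open>0 < c\<close> by simp
  then show "\<exists>j. card {Y \<in> L. Y \<subseteq> X} = 2 ^ j"
    by (auto simp: divides_primepow_nat)
qed

theorem theorem7:
  fixes E :: "'a set" and f :: "'a set \<Rightarrow> nat"
  assumes "finite E"
    and "powerful_multiset E f"
    and "\<forall>X. X \<subseteq> E \<longrightarrow> rank_ms E f X \<le> real (card X)"
  shows "\<exists>(E2 :: 'a set) L. powerful_set E2 L \<and> linear_set L \<and>
           ms_isomorphic E f E2 (set_indicator L)"
proof -
  have bp: "bounded_powerful E f"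
    using bounded_powerful_if_rank_le_card[OF assms] .
  obtain c L where "0 < c" "L \<subseteq> Pow E" "linear_set L"
    and fL: "\<And>Y. Y \<subseteq> E \<Longrightarrow> f Y = c * set_indicator L Y"
    using multiple_of_linear_set_if_bounded_powerful[OF assms(1) bp]
    unfolding multiple_of_linear_set_def by auto
  moreover have "powerful_set E L"
    using powerful_set_if_bounded_powerful[OF assms(1) bp \<open>L \<subseteq> Pow E\<close> fL] .
  moreover have "ms_isomorphic E f E (set_indicator L)"
    unfolding ms_isomorphic_def using \<open>0 < c\<close> fL
    by (intro exI[of _ id] exI[of _ "real c"]) auto
  ultimately show ?thesis
    by blast
qed

end
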